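(* Let $f$, $g$, $\xi$, $F$ satisfy the standing assumptions below, and let $x$ be the unique continuous solution of $x'(t)=-f(x(t))+g(t)$, $t>0$, $x(0)=\xi$. Suppose there exist $\delta>0$ and a function $\phi$ which is increasing on $(0,\delta)$ with $\lim_{x\to0^+}f(x)/\phi(x)=1$. If \[ \lim_{t\to\infty}\frac{g(t)}{f(F^{-1}(t))}=0, \] then \[ \lim_{t\to\infty}\frac{F(x(t))}{t}=1 . \]
   Context: Standing assumptions: $f\in C(\mathbb{R};\mathbb{R})$ is locally Lipschitz continuous on $\mathbb{R}$, $f(0)=0$ and $xf(x)>0$ for $x\neq0$; $g\in C([0,\infty);\mathbb{R})$ with $g(t)>0$ for $t>0$; the initial value $\xi>0$. Define $F(x)=\int_x^1 \frac{du}{f(u)}$ for $x>0$, and assume $\lim_{x\to0^+}F(x)=+\infty$. $F$ is strictly decreasing on $(0,\infty)$ and $F^{-1}$ denotes its inverse (defined in particular on $[0,\infty)$, with $F^{-1}(t)\to0$ as $t\to\infty$). *)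

theory Defs
  imports "HOL-Analysis.Analysis"
begin

definition Ffun :: "(real \<Rightarrow> real) \<Rightarrow> real \<Rightarrow> real" where
  "Ffun f x = (if x \<le> 1 then integral {x..1} (\<lambda>u. 1 / f u)
               else - integral {1..x} (\<lambda>u. 1 / f u))"

definition Finv :: "(real \<Rightarrow> real) \<Rightarrow> real \<Rightarrow> real" where
  "Finv f t = (THE y. y > 0 \<and> Ffun f y = t)"

end

theory Submission
  imports Defs
begin

text \<open>Put \<open>w(t) = F(x(t)) - t\<close>. As \<open>F' = -1/f\<close>, the equation gives \<open>w' = -g/f(x) \<le> 0\<close>,
  and the claim is \<open>w(t) = o(t)\<close>. If \<open>w\<close> stays positive it is bounded. Otherwise
  \<open>x(t) \<ge> F\<^sup>-\<^sup>1(t)\<close> from some time on; moreover \<open>g \<le> f \<circ> F\<^sup>-\<^sup>1\<close> eventually makes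
  \<open>x + F\<^sup>-\<^sup>1\<close> nonincreasing, so \<open>x\<close> stays bounded. Where \<open>x\<close> is small, \<open>f \<sim> \<phi>\<close> with \<open>\<phi>\<close>
  increasing gives \<open>f(F\<^sup>-\<^sup>1(t)) \<le> 4 f(x(t))\<close>, so \<open>g/f(x)\<close> inherits the smallness of
  \<open>g/f(F\<^sup>-\<^sup>1)\<close>; elsewhere \<open>f(x)\<close> is bounded below and \<open>g \<rightarrow> 0\<close>. Hence \<open>w' \<rightarrow> 0\<close>.\<close>

lemma pos_if_deriv_pos_at_nonpos:
  fixes x D :: "real \<Rightarrow> real"
  assumes x_cont: "continuous_on {0..} x" and x0: "x 0 > 0"
    and x_deriv: "\<And>t. t > 0 \<Longrightarrow> (x has_real_derivative D t) (at t)"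
    and D_pos: "\<And>t. t > 0 \<Longrightarrow> x t \<le> 0 \<Longrightarrow> D t > 0"
    and t: "t \<ge> 0"
  shows "x t > 0"
proof (rule ccontr)
  assume "\<not> x t > 0"
  define S where "S = {0..t} \<inter> x -` {..0}"
  have "closed S" unfolding S_def
    by (rule continuous_closed_preimage) (use continuous_on_subset[OF x_cont] in auto)
  moreover have "t \<in> S" using \<open>\<not> x t > 0\<close> t by (auto simp: S_def)
  moreover have bdd: "bdd_below S" unfolding S_def by (rule bdd_belowI[of _ 0]) auto
  ultimately have "Inf S \<in> S" using closed_contains_Inf by blast
  define t0 where "t0 = Inf S"
  have x_t0: "x t0 \<le> 0" and "t0 \<ge> 0" using \<open>Inf S \<in> S\<close> by (auto simp: S_def t0_def)
  then have "t0 > 0" using x0 by (cases "t0 = 0") auto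
  have x_before: "x s > 0" if "0 \<le> s" "s < t0" for s
  proof (rule ccontr)
    assume "\<not> x s > 0"
    then have "s \<in> S" using that \<open>Inf S \<in> S\<close> by (auto simp: S_def t0_def)
    then show False using cInf_lower[OF _ bdd] that by (force simp: t0_def)
  qed
  obtain d where d: "d > 0" "\<And>h. h > 0 \<Longrightarrow> h < d \<Longrightarrow> x (t0 - h) < x t0"
    using DERIV_pos_inc_left[OF x_deriv D_pos] \<open>t0 > 0\<close> x_t0 by blast
  define h where "h = min d t0 / 2"
  have "h > 0" "h < d" "h < t0" using d \<open>t0 > 0\<close> by (auto simp: h_def)
  then show False using d(2) x_before[of "t0 - h"] x_t0 by force
qed

lemma quotient_tendsto_0_if_bounded:
  fixes w :: "real \<Rightarrow> real"
  assumes "\<And>t. t \<ge> a \<Longrightarrow> \<bar>w t\<bar> \<le> M"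
  shows "((\<lambda>t. w t / t) \<longlongrightarrow> 0) at_top"
proof (rule tendsto_0_le[where K = M])
  show "((\<lambda>t. inverse t :: real) \<longlongrightarrow> 0) at_top"
    by (rule tendsto_inverse_0_at_top[OF filterlim_ident])
  show "eventually (\<lambda>t. norm (w t / t) \<le> norm (inverse t) * M) at_top"
  proof (rule eventually_at_top_linorderI[of "max a 1"])
    fix t assume "t \<ge> max a 1"
    then have "\<bar>w t\<bar> \<le> M" "t > 0" using assms[of t] by auto
    then show "norm (w t / t) \<le> norm (inverse t) * M"
      by (simp add: abs_mult divide_inverse_commute mult_left_mono)
  qed
qed

lemma quotient_tendsto_0_if_deriv_tendsto_0:
  fixes w w' :: "real \<Rightarrow> real"
  assumes w_deriv: "\<And>t. t > a \<Longrightarrow> (w has_real_derivative w' t) (at t)"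
    and w'_lim: "(w' \<longlongrightarrow> 0) at_top"
  shows "((\<lambda>t. w t / t) \<longlongrightarrow> 0) at_top"
proof (rule tendstoI)
  fix e :: real assume "e > 0"
  then have "eventually (\<lambda>t. \<bar>w' t\<bar> < e / 2) at_top"
    using tendstoD[OF w'_lim, of "e / 2"] by simp
  then obtain T0 where T0: "\<And>t. t \<ge> T0 \<Longrightarrow> \<bar>w' t\<bar> < e / 2"
    unfolding eventually_at_top_linorder by blast
  define T where "T = max T0 (max a 0) + 1"
  have T: "T > max a 0" "\<And>t. t \<ge> T \<Longrightarrow> \<bar>w' t\<bar> < e / 2"
    using T0 by (auto simp: T_def)
  have slope: "\<bar>w t - w T\<bar> \<le> e / 2 * t" if tT: "t > T" for t
  proof -
    obtain z where "T < z" "z < t" "w t - w T = (t - T) * w' z"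
      using MVT2[OF tT, of w w'] w_deriv T(1) by force
    then have "\<bar>w t - w T\<bar> \<le> (t - T) * (e / 2)"
      using T(2)[of z] by (simp add: abs_mult mult_left_mono)
    also have "\<dots> \<le> e / 2 * t" using T(1) \<open>e > 0\<close> by simp
    finally show ?thesis .
  qed
  have "eventually (\<lambda>t. t > max T (2 * \<bar>w T\<bar> / e)) at_top" by (rule eventually_gt_at_top)
  then show "eventually (\<lambda>t. dist (w t / t) 0 < e) at_top"
  proof eventually_elim
    case (elim t)
    then have "\<bar>w T\<bar> < e / 2 * t" using \<open>e > 0\<close> by (simp add: divide_less_eq mult.commute)
    then have "\<bar>w t\<bar> < e * t" using slope[of t] elim by linarith
    then show ?case using elim T(1) by (simp add: abs_divide divide_less_eq)
  qed
qed

lemma quasi_mono_near_0_if_asymp_mono: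
  fixes f \<phi> :: "real \<Rightarrow> real"
  assumes f_pos: "\<And>y. y > 0 \<Longrightarrow> f y > 0"
    and \<phi>_mono: "mono_on {0<..<\<delta>} \<phi>" and "\<delta> > 0"
    and \<phi>_lim: "((\<lambda>y. f y / \<phi> y) \<longlongrightarrow> 1) (at_right 0)"
  obtains \<eta> where "\<eta> > 0" "\<And>u v. 0 < u \<Longrightarrow> u \<le> v \<Longrightarrow> v < \<eta> \<Longrightarrow> f u \<le> 4 * f v"
proof -
  have "eventually (\<lambda>y. 1/2 < f y / \<phi> y \<and> f y / \<phi> y < 2) (at_right 0)"
    using order_tendstoD[OF \<phi>_lim, of "1/2"] order_tendstoD[OF \<phi>_lim, of 2] by (simp add: eventually_conj)
  then obtain b where "b > 0" and b: "\<And>y. 0 < y \<Longrightarrow> y < b \<Longrightarrow> 1/2 < f y / \<phi> y \<and> f y / \<phi> y < 2"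
    unfolding eventually_at_right_field by auto
  have comparable: "f y \<le> 2 * \<phi> y \<and> \<phi> y \<le> 2 * f y" if "0 < y" "y < b" for y
  proof -
    have "\<phi> y > 0"
    proof (rule ccontr)
      assume "\<not> \<phi> y > 0"
      then have "f y / \<phi> y \<le> 0" using f_pos[OF \<open>0 < y\<close>] by (simp add: divide_nonneg_nonpos)
      then show False using b[OF that] by simp
    qed
    then show ?thesis using b[OF that] by (simp add: divide_less_eq less_divide_eq)
  qed
  show ?thesis
  proof (rule that[of "min b \<delta>"])
    fix u v assume "0 < u" "u \<le> v" "v < min b \<delta>"
    then have "\<phi> u \<le> \<phi> v" by (intro mono_onD[OF \<phi>_mono]) auto
    then show "f u \<le> 4 * f v" using comparable[of u] comparable[of v] \<open>0 < u\<close> \<open>u \<le> v\<close> \<open>v < min b \<delta>\<close> by auto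
  qed (use \<open>b > 0\<close> \<open>\<delta> > 0\<close> in auto)
qed

lemma ratio_tendsto_0_if_between:
  fixes f g a b :: "real \<Rightarrow> real" and \<eta> C B :: real
  assumes f_cont: "continuous_on UNIV f" and f_pos: "\<And>y. y > 0 \<Longrightarrow> f y > 0"
    and quasi_mono: "\<And>u v. 0 < u \<Longrightarrow> u \<le> v \<Longrightarrow> v < \<eta> \<Longrightarrow> f u \<le> C * f v" and "\<eta> > 0"
    and between: "eventually (\<lambda>t. 0 < a t \<and> a t \<le> b t \<and> b t \<le> B) at_top"
    and g_lim: "(g \<longlongrightarrow> 0) at_top"
    and ga_lim: "((\<lambda>t. g t / f (a t)) \<longlongrightarrow> 0) at_top"
  shows "((\<lambda>t. g t / f (b t)) \<longlongrightarrow> 0) at_top"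
proof -
  obtain m where "m > 0" and m: "\<And>y. y \<in> {\<eta>..max \<eta> B} \<Longrightarrow> m \<le> f y"
  proof -
    obtain y0 where "y0 \<in> {\<eta>..max \<eta> B}" "\<forall>y\<in>{\<eta>..max \<eta> B}. f y0 \<le> f y"
      using continuous_attains_inf[of "{\<eta>..max \<eta> B}" f] continuous_on_subset[OF f_cont subset_UNIV] by auto
    then show ?thesis using that[of "f y0"] f_pos[of y0] \<open>\<eta> > 0\<close> by auto
  qed
  have majorant_lim: "((\<lambda>t. \<bar>g t / f (a t)\<bar> + \<bar>g t\<bar>) \<longlongrightarrow> 0) at_top"
    using tendsto_add[OF tendsto_rabs_zero[OF ga_lim] tendsto_rabs_zero[OF g_lim]] by simp
  have "eventually (\<lambda>t. norm (g t / f (b t))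
      \<le> norm (\<bar>g t / f (a t)\<bar> + \<bar>g t\<bar>) * max C (1 / m)) at_top"
    using between
  proof eventually_elim
    case (elim t)
    then have fa: "f (a t) > 0" and fb: "f (b t) > 0" using f_pos by auto
    have K: "C \<le> max C (1 / m)" "1 / m \<le> max C (1 / m)" "0 \<le> max C (1 / m)"
      using \<open>m > 0\<close> by (auto simp: le_max_iff_disj)
    have "\<bar>g t\<bar> / f (b t) \<le> max C (1 / m) * (\<bar>g t\<bar> / f (a t) + \<bar>g t\<bar>)"
    proof (cases "b t < \<eta>")
      case True
      then have "f (a t) \<le> C * f (b t)" using quasi_mono elim by auto
      then have "\<bar>g t\<bar> * f (a t) \<le> \<bar>g t\<bar> * (C * f (b t))" by (rule mult_left_mono) simp
      then have "\<bar>g t\<bar> / f (b t) \<le> C * (\<bar>g t\<bar> / f (a t))"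
        using fa fb by (simp add: field_simps)
      also have "\<dots> \<le> max C (1 / m) * (\<bar>g t\<bar> / f (a t) + \<bar>g t\<bar>)"
        using fa \<open>m > 0\<close> by (intro mult_mono) (auto simp: K)
      finally show ?thesis .
    next
      case False
      then have "m \<le> f (b t)" using m elim by auto
      then have "\<bar>g t\<bar> / f (b t) \<le> 1 / m * \<bar>g t\<bar>"
        using \<open>m > 0\<close> by (simp add: frac_le)
      also have "\<dots> \<le> max C (1 / m) * (\<bar>g t\<bar> / f (a t) + \<bar>g t\<bar>)"
        using fa \<open>m > 0\<close> by (intro mult_mono) (auto simp: K)
      finally show ?thesis .
    qed
    then show ?case using fa fb by (simp add: abs_divide mult.commute)
  qed
  then show ?thesis by (rule tendsto_0_le[OF majorant_lim])
qed

lemma Ffun_has_real_derivative: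
  fixes f :: "real \<Rightarrow> real"
  assumes f_cont: "continuous_on UNIV f" and f_pos: "\<And>y. y > 0 \<Longrightarrow> f y > 0" and "y > 0"
  shows "(Ffun f has_real_derivative - (1 / f y)) (at y)"
proof -
  define c where "c = min (y / 2) (1 / 2)"
  define B where "B = y + 2"
  define \<Phi> where "\<Phi> z = integral {c..z} (\<lambda>u. 1 / f u)" for z
  have c: "c > 0" "c < y" "y < B" "1 < B" "c < 1" using \<open>y > 0\<close> by (auto simp: c_def B_def)
  have "f u \<noteq> 0" if "u \<in> {c..B}" for u
    using f_pos[of u] that c by auto
  then have cont: "continuous_on {c..B} (\<lambda>u. 1 / f u)"
    by (auto intro!: continuous_intros continuous_on_subset[OF f_cont])
  have int: "(\<lambda>u. 1 / f u) integrable_on {c..B}" by (rule integrable_continuous_interval[OF cont])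
  have "(\<Phi> has_real_derivative 1 / f y) (at y within {c..B})"
    unfolding \<Phi>_def using integral_has_real_derivative[OF cont, of y] c by auto
  then have "(\<Phi> has_real_derivative 1 / f y) (at y)" using at_within_Icc_at[of c y B] c by simp
  then have "((\<lambda>z. \<Phi> 1 - \<Phi> z) has_real_derivative - (1 / f y)) (at y)"
    by (auto intro!: derivative_eq_intros)
  then show ?thesis
  proof (rule has_field_derivative_transform_within_open[of _ _ _ "{c<..<B}"])
    show "y \<in> {c<..<B}" using c by simp
    fix z assume z: "z \<in> {c<..<B}"
    show "\<Phi> 1 - \<Phi> z = Ffun f z"
    proof (cases "z \<le> 1")
      case True
      have "integral {c..z} (\<lambda>u. 1 / f u) + integral {z..1} (\<lambda>u. 1 / f u) = integral {c..1} (\<lambda>u. 1 / f u)"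
        by (rule Henstock_Kurzweil_Integration.integral_combine) (use z True c in \<open>auto intro: integrable_on_subinterval[OF int]\<close>)
      then show ?thesis using True by (simp add: Ffun_def \<Phi>_def)
    next
      case False
      have "integral {c..1} (\<lambda>u. 1 / f u) + integral {1..z} (\<lambda>u. 1 / f u) = integral {c..z} (\<lambda>u. 1 / f u)"
        by (rule Henstock_Kurzweil_Integration.integral_combine) (use z False c in \<open>auto intro: integrable_on_subinterval[OF int]\<close>)
      then show ?thesis using False by (simp add: Ffun_def \<Phi>_def)
    qed
  qed simp
qed

locale decay_rate =
  fixes f :: "real \<Rightarrow> real"
  assumes f_cont: "continuous_on UNIV f" and f_pos: "\<And>y. y > 0 \<Longrightarrow> f y > 0"
    and Ffun_lim: "filterlim (Ffun f) at_top (at_right 0)"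
begin

lemma Ffun_deriv: "y > 0 \<Longrightarrow> (Ffun f has_real_derivative - (1 / f y)) (at y)"
  using Ffun_has_real_derivative[OF f_cont f_pos] .

lemma Ffun_isCont: "y > 0 \<Longrightarrow> isCont (Ffun f) y"
  using Ffun_deriv DERIV_isCont by blast

lemma Ffun_strict_antimono: assumes "0 < a" "a < b" shows "Ffun f b < Ffun f a"
proof (rule DERIV_neg_imp_decreasing[OF \<open>a < b\<close>])
  fix y assume "a \<le> y" "y \<le> b"
  then have "y > 0" using assms by auto
  then show "\<exists>D. DERIV (Ffun f) y :> D \<and> D < 0"
    using Ffun_deriv[of y] f_pos[of y] by (intro exI[of _ "- (1 / f y)"]) auto
qed

lemma Ffun_less_iff: "0 < a \<Longrightarrow> 0 < b \<Longrightarrow> Ffun f a < Ffun f b \<longleftrightarrow> b < a"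
  by (metis Ffun_strict_antimono linorder_neqE_linordered_idom order_less_asym order_less_irrefl)

lemma Ffun_le_iff: "0 < a \<Longrightarrow> 0 < b \<Longrightarrow> Ffun f a \<le> Ffun f b \<longleftrightarrow> b \<le> a"
  using Ffun_less_iff by (meson linorder_not_le)

lemma Ffun_attains: assumes "b > 0" "Ffun f b \<le> s" shows "\<exists>y>0. Ffun f y = s"
proof -
  obtain b' where "b' > 0" and b': "\<And>y. 0 < y \<Longrightarrow> y < b' \<Longrightarrow> s \<le> Ffun f y"
    using Ffun_lim unfolding filterlim_at_top eventually_at_right_field by blast
  define a where "a = min (b' / 2) (b / 2)"
  have a: "0 < a" "a < b" "a < b'" using \<open>b > 0\<close> \<open>b' > 0\<close> by (auto simp: a_def)
  have "continuous_on {a..b} (Ffun f)"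
    using a by (intro continuous_at_imp_continuous_on ballI Ffun_isCont) auto
  then obtain y where "a \<le> y" "y \<le> b" "Ffun f y = s"
    using IVT2'[of "Ffun f" b s a] b'[of a] assms a by auto
  then show ?thesis using a by (intro exI[of _ y]) auto
qed

lemma Finv_Ffun: "y > 0 \<Longrightarrow> Finv f (Ffun f y) = y"
  unfolding Finv_def by (rule the_equality) (auto, metis Ffun_less_iff linorder_neqE_linordered_idom order_less_irrefl)

lemma Finv_inverse: assumes "b > 0" "Ffun f b \<le> s" shows "Finv f s > 0 \<and> Ffun f (Finv f s) = s"
  using Ffun_attains[OF assms] Finv_Ffun by auto

lemma Finv_inverse_nonneg: "s \<ge> 0 \<Longrightarrow> Finv f s > 0 \<and> Ffun f (Finv f s) = s"
  using Finv_inverse[of 1 s] by (simp add: Ffun_def)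

lemma Finv_tendsto_0: "(Finv f \<longlongrightarrow> 0) at_top"
proof (rule tendstoI)
  fix e :: real assume "e > 0"
  have "eventually (\<lambda>t. t > max 0 (Ffun f e)) at_top" by (rule eventually_gt_at_top)
  then show "eventually (\<lambda>t. dist (Finv f t) 0 < e) at_top"
  proof eventually_elim
    case (elim t)
    then have "Finv f t > 0" "Ffun f e < Ffun f (Finv f t)" using Finv_inverse_nonneg[of t] by auto
    then show ?case using Ffun_less_iff[of e "Finv f t"] \<open>e > 0\<close> by simp
  qed
qed

lemma Finv_deriv: assumes "t \<ge> 0" shows "(Finv f has_real_derivative - f (Finv f t)) (at t)"
proof -
  define y where "y = Finv f t"
  have y: "y > 0" "Ffun f y = t" using Finv_inverse_nonneg[OF assms] by (auto simp: y_def)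
  have lo: "Ffun f (2 * y) < t" and hi: "t < Ffun f (y / 2)"
    using Ffun_strict_antimono[of y "2 * y"] Ffun_strict_antimono[of "y / 2" y] y by auto
  have "isCont (Finv f) (Ffun f y)"
    by (rule isCont_inverse_function2[of "y / 2" y "2 * y"])
       (use y in \<open>auto intro!: Finv_Ffun Ffun_isCont\<close>)
  then have "(Finv f has_real_derivative inverse (- (1 / f y))) (at t)"
    using y f_pos[of y] Finv_Ffun[of y] Ffun_deriv[of y]
    by (intro DERIV_inverse_function[where f = "Ffun f" and a = "Ffun f (2 * y)" and b = "Ffun f (y / 2)", OF _ _ lo hi])
       (auto intro: Finv_inverse[of "2 * y", THEN conjunct2] simp: y_def)
  then show ?thesis using f_pos[of y] y by (simp add: y_def)
qed

lemma tendsto_0_if_ratio_Finv_tendsto_0: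
  assumes "f 0 = 0" and g_small: "((\<lambda>t. g t / f (Finv f t)) \<longlongrightarrow> 0) at_top"
  shows "(g \<longlongrightarrow> 0) at_top"
proof -
  have "((\<lambda>t. f (Finv f t)) \<longlongrightarrow> 0) at_top"
    using isCont_tendsto_compose[OF _ Finv_tendsto_0, of f] f_cont \<open>f 0 = 0\<close>
    by (simp add: continuous_on_eq_continuous_at)
  from tendsto_mult[OF g_small this] have "((\<lambda>t. g t / f (Finv f t) * f (Finv f t)) \<longlongrightarrow> 0) at_top"
    by simp
  moreover have "eventually (\<lambda>t. g t / f (Finv f t) * f (Finv f t) = g t) at_top"
    using eventually_ge_at_top[of 0] by eventually_elim (use Finv_inverse_nonneg f_pos in force)
  ultimately show ?thesis by (rule Lim_transform_eventually)
qed

lemma solution_le_if_forcing_le_Finv_rate: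
  fixes x g :: "real \<Rightarrow> real"
  assumes "T \<ge> 0"
    and x_ode: "\<And>t. t \<ge> T \<Longrightarrow> (x has_real_derivative - f (x t) + g t) (at t)"
    and x_pos: "\<And>t. t \<ge> T \<Longrightarrow> x t > 0"
    and g_le: "\<And>t. t \<ge> T \<Longrightarrow> g t \<le> f (Finv f t)"
    and "t \<ge> T"
  shows "x t \<le> x T + Finv f T"
proof -
  have "x t + Finv f t \<le> x T + Finv f T"
  proof (rule DERIV_nonpos_imp_nonincreasing[OF \<open>t \<ge> T\<close>])
    fix r assume "T \<le> r"
    then have "DERIV (\<lambda>s. x s + Finv f s) r :> (- f (x r) + g r) + (- f (Finv f r))"
      using \<open>T \<ge> 0\<close> by (intro DERIV_add Finv_deriv x_ode) auto
    moreover have "(- f (x r) + g r) + (- f (Finv f r)) \<le> 0"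
      using g_le[OF \<open>T \<le> r\<close>] f_pos[OF x_pos[OF \<open>T \<le> r\<close>]] by simp
    ultimately show "\<exists>D. DERIV (\<lambda>s. x s + Finv f s) r :> D \<and> D \<le> 0" by blast
  qed
  then show ?thesis using Finv_inverse_nonneg[of t] \<open>t \<ge> T\<close> \<open>T \<ge> 0\<close> by simp
qed

lemma Ffun_solution_deriv:
  assumes "x t > 0" and "(x has_real_derivative - f (x t) + g t) (at t)"
  shows "((\<lambda>s. Ffun f (x s) - s) has_real_derivative - (g t / f (x t))) (at t)"
proof -
  have "((\<lambda>s. Ffun f (x s) - s) has_real_derivative - (1 / f (x t)) * (- f (x t) + g t) - 1) (at t)"
    by (intro DERIV_diff DERIV_chain2[OF Ffun_deriv] DERIV_ident assms)
  moreover have "- (1 / f (x t)) * (- f (x t) + g t) - 1 = - (g t / f (x t))"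
    using f_pos[OF \<open>x t > 0\<close>] by (simp add: field_simps)
  ultimately show ?thesis by simp
qed

lemma forcing_over_solution_tendsto_0:
  fixes x g :: "real \<Rightarrow> real"
  assumes "T0 > 0"
    and x_pos: "\<And>t. t > 0 \<Longrightarrow> x t > 0"
    and x_ode: "\<And>t. t > 0 \<Longrightarrow> (x has_real_derivative - f (x t) + g t) (at t)"
    and Finv_le_x: "\<And>t. t \<ge> T0 \<Longrightarrow> Finv f t \<le> x t"
    and quasi_mono: "\<And>u v. 0 < u \<Longrightarrow> u \<le> v \<Longrightarrow> v < \<eta> \<Longrightarrow> f u \<le> C * f v" and "\<eta> > 0"
    and g_lim: "(g \<longlongrightarrow> 0) at_top"
    and g_small: "((\<lambda>t. g t / f (Finv f t)) \<longlongrightarrow> 0) at_top"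
  shows "((\<lambda>t. g t / f (x t)) \<longlongrightarrow> 0) at_top"
proof -
  obtain N where N: "\<And>t. t \<ge> N \<Longrightarrow> g t / f (Finv f t) < 1"
    using order_tendstoD(2)[OF g_small, of 1] unfolding eventually_at_top_linorder by auto
  define T where "T = max N T0"
  have "T > 0" "T \<ge> T0" using \<open>T0 > 0\<close> by (auto simp: T_def)
  have g_le: "g t \<le> f (Finv f t)" if "t \<ge> T" for t
  proof -
    have "f (Finv f t) > 0" using f_pos Finv_inverse_nonneg[of t] \<open>T > 0\<close> that by simp
    then show ?thesis using N[of t] that by (simp add: T_def divide_less_eq)
  qed
  have x_le: "x t \<le> x T + Finv f T" if "t \<ge> T" for t
    using \<open>T > 0\<close> x_ode x_pos g_le that
    by (intro solution_le_if_forcing_le_Finv_rate[of T x g]) auto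
  have "eventually (\<lambda>t. 0 < Finv f t \<and> Finv f t \<le> x t \<and> x t \<le> x T + Finv f T) at_top"
  proof (rule eventually_at_top_linorderI[of T])
    fix t assume "t \<ge> T"
    then show "0 < Finv f t \<and> Finv f t \<le> x t \<and> x t \<le> x T + Finv f T"
      using Finv_inverse_nonneg[of t] Finv_le_x[of t] x_le[of t] \<open>T > 0\<close> \<open>T \<ge> T0\<close> by simp
  qed
  then show ?thesis
    using ratio_tendsto_0_if_between[OF f_cont f_pos quasi_mono \<open>\<eta> > 0\<close> _ g_lim g_small] by blast
qed

lemma Ffun_solution_over_time_tendsto_1:
  fixes x g :: "real \<Rightarrow> real"
  assumes x_pos: "\<And>t. t > 0 \<Longrightarrow> x t > 0"
    and x_ode: "\<And>t. t > 0 \<Longrightarrow> (x has_real_derivative - f (x t) + g t) (at t)"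
    and g_nonneg: "\<And>t. t > 0 \<Longrightarrow> g t \<ge> 0"
    and quasi_mono: "\<And>u v. 0 < u \<Longrightarrow> u \<le> v \<Longrightarrow> v < \<eta> \<Longrightarrow> f u \<le> C * f v" and "\<eta> > 0"
    and g_lim: "(g \<longlongrightarrow> 0) at_top"
    and g_small: "((\<lambda>t. g t / f (Finv f t)) \<longlongrightarrow> 0) at_top"
  shows "((\<lambda>t. Ffun f (x t) / t) \<longlongrightarrow> 1) at_top"
proof -
  define w where "w t = Ffun f (x t) - t" for t
  have w_deriv: "(w has_real_derivative - (g t / f (x t))) (at t)" if "t > 0" for t
    unfolding w_def[abs_def] using Ffun_solution_deriv x_pos x_ode that by blast
  have w_antimono: "w t \<le> w s" if "0 < s" "s \<le> t" for s t
  proof (rule DERIV_nonpos_imp_nonincreasing[OF \<open>s \<le> t\<close>])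
    fix r assume "s \<le> r"
    then have "r > 0" using \<open>0 < s\<close> by simp
    then show "\<exists>D. DERIV w r :> D \<and> D \<le> 0"
      using w_deriv[of r] g_nonneg[of r] f_pos[OF x_pos[of r]] by (intro exI[of _ "- (g r / f (x r))"]) simp
  qed
  have "((\<lambda>t. w t / t) \<longlongrightarrow> 0) at_top"
  proof (cases "\<forall>t>0. w t > 0")
    case True
    have "\<bar>w t\<bar> \<le> w 1" if "t \<ge> 1" for t
    proof -
      have "0 < w t" "w t \<le> w 1" using True w_antimono[of 1 t] that by auto
      then show ?thesis by simp
    qed
    then show ?thesis by (rule quotient_tendsto_0_if_bounded)
  next
    case False
    then obtain T0 where "T0 > 0" "w T0 \<le> 0" by (auto simp: not_less)
    have Finv_le_x: "Finv f t \<le> x t" if "t \<ge> T0" for t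
    proof -
      have "t > 0" using \<open>T0 > 0\<close> that by simp
      then have "x t > 0" "Finv f t > 0" "Ffun f (Finv f t) = t"
        using x_pos Finv_inverse_nonneg[of t] by auto
      moreover have "w t \<le> 0" using w_antimono[OF \<open>T0 > 0\<close> that] \<open>w T0 \<le> 0\<close> by simp
      ultimately have "Ffun f (x t) \<le> Ffun f (Finv f t)" by (simp add: w_def)
      then show ?thesis using Ffun_le_iff \<open>x t > 0\<close> \<open>Finv f t > 0\<close> by blast
    qed
    have "((\<lambda>t. g t / f (x t)) \<longlongrightarrow> 0) at_top"
      using forcing_over_solution_tendsto_0[OF \<open>T0 > 0\<close> x_pos x_ode Finv_le_x quasi_mono \<open>\<eta> > 0\<close> g_lim g_small] .
    from tendsto_minus[OF this] have w'_lim: "((\<lambda>t. - (g t / f (x t))) \<longlongrightarrow> 0) at_top" by simp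
    show ?thesis by (rule quotient_tendsto_0_if_deriv_tendsto_0[of 0 w "\<lambda>t. - (g t / f (x t))", OF w_deriv w'_lim])
  qed
  then have "((\<lambda>t. 1 + w t / t) \<longlongrightarrow> 1 + 0) at_top" by (intro tendsto_add tendsto_const)
  moreover have "eventually (\<lambda>t. 1 + w t / t = Ffun f (x t) / t) at_top"
    using eventually_gt_at_top[of 0] by eventually_elim (simp add: w_def field_simps)
  ultimately show ?thesis by (simp add: Lim_transform_eventually)
qed

end

theorem theorem1:
  fixes f g x \<phi> :: "real \<Rightarrow> real" and \<xi> \<delta> :: real
  assumes f_cont: "continuous_on UNIV f"
    and f_loclip: "\<forall>y. \<exists>e>0. \<exists>L. L-lipschitz_on (cball y e) f"
    and f0: "f 0 = 0"
    and f_sign: "\<forall>y. y \<noteq> 0 \<longrightarrow> y * f y > 0"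
    and g_cont: "continuous_on {0..} g"
    and g_pos: "\<forall>t>0. g t > 0"
    and xi_pos: "\<xi> > 0"
    and F_lim: "filterlim (Ffun f) at_top (at_right 0)"
    and x_cont: "continuous_on {0..} x"
    and x_init: "x 0 = \<xi>"
    and x_ode: "\<forall>t>0. (x has_real_derivative (- f (x t) + g t)) (at t)"
    and delta_pos: "\<delta> > 0"
    and phi_mono: "mono_on {0<..<\<delta>} \<phi>"
    and phi_lim: "((\<lambda>y. f y / \<phi> y) \<longlongrightarrow> 1) (at_right 0)"
    and g_small: "((\<lambda>t. g t / f (Finv f t)) \<longlongrightarrow> 0) at_top"
  shows "((\<lambda>t. Ffun f (x t) / t) \<longlongrightarrow> 1) at_top"
proof -
  \<comment> \<open>Lipschitz continuity of \<open>f\<close> and continuity of \<open>g\<close> only serve existence and uniqueness of \<open>x\<close>.\<close>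
  have f_pos: "f y > 0" if "y > 0" for y
    using f_sign that by (metis less_irrefl zero_less_mult_pos)
  have f_nonpos: "f y \<le> 0" if "y \<le> 0" for y
  proof (cases "y = 0")
    case False
    then have "y * f y > 0" using f_sign by auto
    then show ?thesis using that False by (auto simp: zero_less_mult_iff)
  qed (simp add: f0)
  interpret decay_rate f using f_cont f_pos F_lim by unfold_locales
  have x_pos: "x t > 0" if "t \<ge> 0" for t
  proof (rule pos_if_deriv_pos_at_nonpos[OF x_cont _ _ _ that])
    show "x 0 > 0" using x_init xi_pos by simp
    show "(x has_real_derivative - f (x s) + g s) (at s)" if "s > 0" for s
      using x_ode that by simp
    show "- f (x s) + g s > 0" if "s > 0" "x s \<le> 0" for s
      using f_nonpos[OF that(2)] g_pos that(1) by fastforce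
  qed
  obtain \<eta> where "\<eta> > 0" and quasi_mono: "\<And>u v. 0 < u \<Longrightarrow> u \<le> v \<Longrightarrow> v < \<eta> \<Longrightarrow> f u \<le> 4 * f v"
    using quasi_mono_near_0_if_asymp_mono[OF f_pos phi_mono delta_pos phi_lim] by blast
  show ?thesis
  proof (rule Ffun_solution_over_time_tendsto_1[OF _ _ _ quasi_mono \<open>\<eta> > 0\<close>])
    show "(g \<longlongrightarrow> 0) at_top" by (rule tendsto_0_if_ratio_Finv_tendsto_0[OF f0 g_small])
  qed (use x_pos x_ode g_pos g_small in \<open>auto simp: less_imp_le\<close>)
qed

end
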